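(* Let $x,y$ be non-commuting indeterminates and $C=xyx^{-1}y^{-1}$. Let $(R_n)_{n\in\mathbb Z}$ satisfy $$R_{2n}CR_{2n-2}=1+R_{2n-1},\qquad R_{2n+1}CR_{2n-1}=1+R_{2n}^4\qquad(n\in\mathbb Z),$$ with $R_0=yxy^{-1}$ and $R_1=y$. Set $u_n=R_{2n}$. Then $$K_n:=\big((Cu_n)^2+u_{n+1}^2\big)\big(u_{n+1}Cu_n-1\big)^{-1}$$ is independent of $n$.
   Context: Work in the free skew field (non-commutative rational functions) over $\mathbb C$ generated by $x,y$. The two displayed relations are the $(1,4)$-system. They determine $R_n$ for all $n\in\mathbb Z$ from $R_0,R_1$. Note that $u_{n+1}Cu_n-1=R_{2n+1}$. *)

theory Defs
  imports Main
begin

definition commutator_C :: "'a::division_ring \<Rightarrow> 'a \<Rightarrow> 'a" where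
  "commutator_C x y = x * y * inverse x * inverse y"

end

theory Submission imports Defs begin

(* Consecutive terms satisfy the twisted commutation R_k C R_{k-1} = R_{k-1} R_k.  It holds for
   k = 1 by the choice of R_0, R_1 and propagates in both directions along Z, because the
   right-hand sides 1 + R_{2n-1} and 1 + R_{2n}^4 of the exchange relations commute with the
   middle term.  Given these commutations the denominator of K_n is R_{2n+1}, and both K_n and
   K_{n+1} reduce to one and the same rational expression in R_{2n+1} and R_{2n+2}. *)

lemma int_induct_iff:
  fixes P :: "int \<Rightarrow> bool"
  assumes "P k" and step: "\<And>i. P i \<longleftrightarrow> P (i + 1)"
  shows "P i"
  using assms(1)
proof (induction i rule: int_induct[where k = k])
  case (step2 i)
  then show ?case using step[of "i - 1"] by simp
qed (use step in simp_all)

lemma inverse_mult_cancel: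
  fixes a z :: "'a::division_ring"
  assumes "a \<noteq> 0"
  shows "inverse a * (a * z) = z" "a * (inverse a * z) = z"
  using assms by (simp_all add: mult.assoc[symmetric])

(* P, N, Q play the roles of R_{k-1}, R_k, R_{k+1}, and F = R_{k+1} C R_{k-1}. *)
lemma twisted_commute_step_iff:
  fixes P N Q C F :: "'a::division_ring"
  assumes nP: "P \<noteq> 0" and nC: "C \<noteq> 0" and nF: "F \<noteq> 0"
    and rel: "Q * C * P = F" and com: "F * N = N * F"
  shows "N * C * P = P * N \<longleftrightarrow> Q * C * N = N * Q"
proof -
  have Q: "Q = F * inverse P * inverse C"
    unfolding rel[symmetric] using nP nC by (simp add: mult.assoc)
  have lhs: "Q * C * N = F * (inverse P * N)" using Q nC by (simp add: mult.assoc)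
  have "N * Q = (N * F) * (inverse P * inverse C)" by (simp add: Q mult.assoc)
  also have "\<dots> = (F * N) * (inverse P * inverse C)" by (simp add: com)
  finally have rhs: "N * Q = F * (N * inverse P * inverse C)" by (simp add: mult.assoc)
  have "Q * C * N = N * Q \<longleftrightarrow> inverse P * N = N * inverse P * inverse C"
    using lhs rhs nF by simp
  also have "\<dots> \<longleftrightarrow> P * (inverse P * N) = P * (N * inverse P * inverse C)"
    using nP by simp
  also have "\<dots> \<longleftrightarrow> N * C = P * N * inverse P * inverse C * C"
    using nP nC by (simp add: inverse_mult_cancel flip: mult.assoc)
  also have "\<dots> \<longleftrightarrow> N * C = P * N * inverse P"
    using nC by (simp add: mult.assoc)
  also have "\<dots> \<longleftrightarrow> N * C * P = P * N * inverse P * P"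
    using nP by (simp only: mult_cancel_right) simp
  also have "\<dots> \<longleftrightarrow> N * C * P = P * N"
    using nP by (simp add: mult.assoc)
  finally show ?thesis by simp
qed

lemma twisted_commute_all:
  fixes R :: "int \<Rightarrow> 'a::division_ring" and C :: 'a
  assumes nz: "\<And>k. R k \<noteq> 0" and nC: "C \<noteq> 0"
    and com: "\<And>k. R (k + 1) * C * R (k - 1) * R k = R k * (R (k + 1) * C * R (k - 1))"
    and base: "R k\<^sub>0 * C * R (k\<^sub>0 - 1) = R (k\<^sub>0 - 1) * R k\<^sub>0"
  shows "R k * C * R (k - 1) = R (k - 1) * R k"
proof (rule int_induct_iff[where P = "\<lambda>k. R k * C * R (k - 1) = R (k - 1) * R k", OF base])
  fix i
  have "R (i + 1) * C * R (i - 1) \<noteq> 0" using nz nC by simp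
  from twisted_commute_step_iff[OF nz nC this refl com]
  show "R i * C * R (i - 1) = R (i - 1) * R i \<longleftrightarrow>
        R (i + 1) * C * R (i + 1 - 1) = R (i + 1 - 1) * R (i + 1)"
    by simp
qed

definition kval :: "'a::division_ring \<Rightarrow> 'a \<Rightarrow> 'a \<Rightarrow> 'a" where
  "kval C a b = ((C * a)\<^sup>2 + b\<^sup>2) * inverse (b * C * a - 1)"

definition kval_closed :: "'a::division_ring \<Rightarrow> 'a \<Rightarrow> 'a" where
  "kval_closed b w = inverse b * w * inverse b + inverse b * w * inverse b * inverse w
     + inverse b * inverse b + inverse b * inverse b * inverse w + b * b * inverse w"

lemma kval_eq_closed:
  fixes a w b C :: "'a::division_ring"
  assumes nw: "w \<noteq> 0" and nb: "b \<noteq> 0"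
    and com: "w * C * a = a * w" and rel: "b * C * a = 1 + w"
  shows "kval C a b = kval_closed b w"
proof -
  have denom: "b * C * a - 1 = w" using rel by simp
  have "C * a = inverse w * (w * C * a)" using nw by (simp add: mult.assoc inverse_mult_cancel)
  also have "\<dots> = inverse w * (a * w)" by (simp only: com)
  finally have Ca: "C * a = inverse w * a * w" by (simp add: mult.assoc)
  have "a = w * inverse b * (b * (C * a)) * inverse w"
    using nw nb by (simp add: Ca mult.assoc inverse_mult_cancel)
  also have "\<dots> = w * inverse b * (1 + w) * inverse w" using rel by (simp add: mult.assoc)
  also have "\<dots> = w * inverse b * inverse w + w * inverse b"
    using nw by (simp add: algebra_simps inverse_mult_cancel)
  finally have a: "a = w * inverse b * inverse w + w * inverse b" .
  have "kval C a b = (inverse w * a * w * (inverse w * a * w) + b * b) * inverse w"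
    by (simp add: kval_def denom Ca power2_eq_square)
  also have "\<dots> = inverse w * a * a + b * b * inverse w"
    using nw by (simp add: algebra_simps inverse_mult_cancel)
  also have "\<dots> = kval_closed b w"
    unfolding a kval_closed_def using nw nb by (simp add: algebra_simps inverse_mult_cancel)
  finally show ?thesis .
qed

(* Here b, b' are u_{n+1}, u_{n+2} and w, W are R_{2n+1}, R_{2n+3}; the odd relation trades W
   for w, which brings K_{n+1} back to the closed form of K_n. *)
lemma kval_shift_eq_closed:
  fixes w b W b' C :: "'a::division_ring"
  assumes nw: "w \<noteq> 0" and nb: "b \<noteq> 0" and nW: "W \<noteq> 0" and nC: "C \<noteq> 0"
    and com_bw: "b * C * w = w * b" and rel_W: "W * C * w = 1 + b ^ 4"
    and com_Wb: "W * C * b = b * W" and rel_b': "b' * C * b = 1 + W"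
  shows "kval C b b' = kval_closed b w"
proof -
  define t where "t = 1 + b * b * b * b"
  have W_Cw: "W * (C * w) = t" using rel_W by (simp add: t_def power4_eq_xxxx mult.assoc)
  have denom: "b' * C * b - 1 = W" using rel_b' by simp
  have "C * w = inverse b * (b * C * w)" using nb by (simp add: mult.assoc inverse_mult_cancel)
  also have "\<dots> = inverse b * (w * b)" by (simp only: com_bw)
  finally have Cw: "C * w = inverse b * w * b" by (simp add: mult.assoc)
  have "C * b = inverse W * (W * C * b)" using nW by (simp add: mult.assoc inverse_mult_cancel)
  also have "\<dots> = inverse W * (b * W)" by (simp only: com_Wb)
  finally have Cb: "C * b = inverse W * b * W" by (simp add: mult.assoc)
  have iW_t: "inverse W * t = inverse b * w * b"
    using nW by (simp add: W_Cw[symmetric] Cw inverse_mult_cancel)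
  have "C * w \<noteq> 0" using nC nw by simp
  then have "W = W * (C * w) * inverse (C * w)" by (simp add: mult.assoc[of W])
  also have "\<dots> = t * inverse (C * w)" by (simp only: W_Cw)
  also have "\<dots> = t * inverse b * inverse w * b"
    using nw nb by (simp add: Cw nonzero_inverse_mult_distrib mult.assoc)
  finally have W_ib: "W * inverse b = t * inverse b * inverse w"
    using nb by (simp add: mult.assoc)
  have "inverse b * t = t * inverse b"
    using nb by (simp add: t_def distrib_left distrib_right inverse_mult_cancel mult.assoc)
  then have t_ib: "inverse b * (t * z) = t * (inverse b * z)" for z
    by (simp flip: mult.assoc)
  have "b' = b' * (C * b) * inverse W * inverse b * W"
    using nW nb by (simp add: Cb mult.assoc inverse_mult_cancel)
  also have "\<dots> = (1 + W) * inverse W * inverse b * W" using rel_b' by (simp add: mult.assoc)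
  finally have b': "b' = (inverse W + 1) * inverse b * W" using nW by (simp add: algebra_simps)
  have "kval C b b' = (inverse W * b * W * (inverse W * b * W) + b' * b') * inverse W"
    by (simp add: kval_def denom Cb power2_eq_square)
  also have "\<dots> = inverse W * (b * b + inverse b * inverse b)
      + inverse W * inverse b * (W * inverse b) + inverse b * inverse b + inverse b * (W * inverse b)"
    unfolding b' using nW by (simp add: algebra_simps inverse_mult_cancel)
  also have "b * b + inverse b * inverse b = t * inverse b * inverse b"
    using nb by (simp add: t_def algebra_simps inverse_mult_cancel)
  also have "inverse W * (t * inverse b * inverse b) = inverse b * w * inverse b"
    using nb by (simp add: mult.assoc[symmetric] iW_t) (simp add: mult.assoc inverse_mult_cancel)
  also have "inverse W * inverse b * (W * inverse b) = inverse W * (inverse b * t) * inverse b * inverse w"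
    by (simp add: W_ib mult.assoc)
  also have "\<dots> = (inverse W * t) * inverse b * inverse b * inverse w"
    by (simp add: t_ib mult.assoc)
  also have "\<dots> = inverse b * w * inverse b * inverse w"
    using nb by (simp add: iW_t mult.assoc inverse_mult_cancel)
  also have "inverse b * (W * inverse b) = t * inverse b * inverse b * inverse w"
    by (simp add: W_ib t_ib mult.assoc)
  also have "\<dots> = inverse b * inverse b * inverse w + b * b * inverse w"
    using nb by (simp add: t_def algebra_simps inverse_mult_cancel)
  finally show ?thesis by (simp add: kval_closed_def algebra_simps)
qed

lemma one_four_exchange_commutes:
  fixes R :: "int \<Rightarrow> 'a::ring_1" and C :: 'a
  assumes even_rel: "\<And>n. R (2 * n) * C * R (2 * n - 2) = 1 + R (2 * n - 1)"
    and odd_rel: "\<And>n. R (2 * n + 1) * C * R (2 * n - 1) = 1 + R (2 * n) ^ 4"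
  shows "R (k + 1) * C * R (k - 1) * R k = R k * (R (k + 1) * C * R (k - 1))"
proof (cases "even k")
  case True
  then obtain n where "k = 2 * n" by (auto elim: evenE)
  then have "R (k + 1) * C * R (k - 1) = 1 + R k ^ 4" using odd_rel[of n] by simp
  then show ?thesis by (simp add: distrib_left distrib_right power_commutes)
next
  case False
  then obtain n where k: "k = 2 * n + 1" by (auto elim: oddE)
  have idx: "2 * (n + 1) = k + 1" "k + 1 - 2 = k - 1" "k + 1 - 1 = k"
    by (simp_all add: k)
  have "R (k + 1) * C * R (k - 1) = 1 + R k" using even_rel[of "n + 1"] unfolding idx .
  then show ?thesis by (simp add: distrib_left distrib_right)
qed

lemma one_four_kval_shift:
  fixes R :: "int \<Rightarrow> 'a::division_ring" and C :: 'a
  assumes nz: "\<And>k. R k \<noteq> 0" and nC: "C \<noteq> 0"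
    and twist: "\<And>k. R k * C * R (k - 1) = R (k - 1) * R k"
    and even_rel: "\<And>n. R (2 * n) * C * R (2 * n - 2) = 1 + R (2 * n - 1)"
    and odd_rel: "\<And>n. R (2 * n + 1) * C * R (2 * n - 1) = 1 + R (2 * n) ^ 4"
  shows "kval C (R (2 * (n + 1))) (R (2 * (n + 1 + 1))) = kval C (R (2 * n)) (R (2 * (n + 1)))"
proof -
  have idx: "2 * n + 1 - 1 = 2 * n" "2 * (n + 1) - 2 = 2 * n" "2 * (n + 1) - 1 = 2 * n + 1"
    "2 * (n + 1) + 1 - 1 = 2 * (n + 1)" "2 * (n + 1 + 1) - 2 = 2 * (n + 1)"
    "2 * (n + 1 + 1) - 1 = 2 * (n + 1) + 1" by simp_all
  have com_wa: "R (2 * n + 1) * C * R (2 * n) = R (2 * n) * R (2 * n + 1)"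
    using twist[of "2 * n + 1"] unfolding idx .
  have rel_b: "R (2 * (n + 1)) * C * R (2 * n) = 1 + R (2 * n + 1)"
    using even_rel[of "n + 1"] unfolding idx .
  have com_bw: "R (2 * (n + 1)) * C * R (2 * n + 1) = R (2 * n + 1) * R (2 * (n + 1))"
    using twist[of "2 * (n + 1)"] unfolding idx .
  have rel_W: "R (2 * (n + 1) + 1) * C * R (2 * n + 1) = 1 + R (2 * (n + 1)) ^ 4"
    using odd_rel[of "n + 1"] unfolding idx .
  have com_Wb: "R (2 * (n + 1) + 1) * C * R (2 * (n + 1)) = R (2 * (n + 1)) * R (2 * (n + 1) + 1)"
    using twist[of "2 * (n + 1) + 1"] unfolding idx .
  have rel_b': "R (2 * (n + 1 + 1)) * C * R (2 * (n + 1)) = 1 + R (2 * (n + 1) + 1)"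
    using even_rel[of "n + 1 + 1"] unfolding idx .
  note kval_eq_closed[OF nz nz com_wa rel_b]
  moreover note kval_shift_eq_closed[OF nz nz nz nC com_bw rel_W com_Wb rel_b']
  ultimately show ?thesis by simp
qed

theorem lemma4p1:
  fixes x y :: "'a::{division_ring, ring_char_0}"
    and R :: "int \<Rightarrow> 'a"
  assumes "x \<noteq> 0" and "y \<noteq> 0"
    and nz: "\<And>k. R k \<noteq> 0"
    and even_rel: "\<And>n. R (2*n) * commutator_C x y * R (2*n - 2) = 1 + R (2*n - 1)"
    and odd_rel: "\<And>n. R (2*n + 1) * commutator_C x y * R (2*n - 1) = 1 + R (2*n) ^ 4"
    and R0: "R 0 = y * x * inverse y"
    and R1: "R 1 = y"
  shows "\<exists>K. \<forall>n::int.
    ((commutator_C x y * R (2*n))\<^sup>2 + (R (2*(n+1)))\<^sup>2)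
      * inverse (R (2*(n+1)) * commutator_C x y * R (2*n) - 1) = K"
proof -
  define C where "C = commutator_C x y"
  have nC: "C \<noteq> 0" using assms(1,2) by (simp add: C_def commutator_C_def)
  have base: "R 1 * C * R (1 - 1) = R (1 - 1) * R 1"
    using assms(1,2) by (simp add: R0 R1 C_def commutator_C_def mult.assoc inverse_mult_cancel)
  have even_rel': "R (2 * n) * C * R (2 * n - 2) = 1 + R (2 * n - 1)" for n
    using even_rel unfolding C_def .
  have odd_rel': "R (2 * n + 1) * C * R (2 * n - 1) = 1 + R (2 * n) ^ 4" for n
    using odd_rel unfolding C_def .
  have twist: "R k * C * R (k - 1) = R (k - 1) * R k" for k
    using twisted_commute_all[where R = R, OF nz nC
        one_four_exchange_commutes[where R = R, OF even_rel' odd_rel'] base] .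
  define K where "K n = kval C (R (2 * n)) (R (2 * (n + 1)))" for n
  have shift: "K (n + 1) = K n" for n
    unfolding K_def by (rule one_four_kval_shift[where R = R, OF nz nC twist even_rel' odd_rel'])
  have "K n = K 0" for n
    by (rule int_induct_iff[where P = "\<lambda>n. K n = K 0"]) (simp_all add: shift)
  then show ?thesis unfolding K_def kval_def C_def by blast
qed

end
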